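(* Let $A\in B_\infty(L)$ with $A^T=A$, let $\{e_j\}_{j\in\mathbb N}$ be a complete orthonormal system in $L$, and $\Delta_M(A):=\sum_{j=1}^M a(Ae_j)a(\bar e_j)$. If the operators $\Delta_M(A)$ converge strongly on all of $\mathcal F^{(2)}$ as $M\to\infty$, then $A\in B_2(L)$.
   Context: $L$ is a separable complex Hilbert space with $\dim L=\infty$, scalar product antilinear in the first argument, and a conjugation $J:f\mapsto\bar f$ (antilinear involution with $(\bar f,\bar g)=(g,f)$); for bounded $A$, $\bar A:=JAJ$ and $A^T:=(\bar A)^*$. $B_\infty(L)$ and $B_2(L)$ denote the bounded and the Hilbert–Schmidt operators on $L$. $\mathcal F$ carries a Fock representation of the CCR over $L$: on a dense invariant domain $D$ there are operators $a(f),a^\dagger(f)$, linear in $f$, with $[a(f),a(g)]=0=[a^\dagger(f),a^\dagger(g)]$, $[a(f),a^\dagger(g)]=(\bar f,g)\mathrm{id}$, $(a(f)\Phi,\Psi)=(\Phi,a^\dagger(\bar f)\Psi)$, a unit vacuum $\Omega$ with $a(f)\Omega=0$, and $\mathcal F$ is the closure of the span of all vectors $a^\dagger(f_n)\cdots a^\dagger(f_1)\Omega$. $\mathcal F^{(2)}$ is the closure of $\operatorname{span}\{a^\dagger(f_2)a^\dagger(f_1)\Omega\}$; $a(f),a^\dagger(f)$ extend to bounded operators between the closed $n$-particle spaces, which are used. *)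

theory Defs
  imports Complex_Main
begin

text \<open>Abstract complex (pre-)Hilbert spaces: a carrier type with addition, a complex
  scalar multiplication sc and an inner product ip, antilinear in the first argument.\<close>

definition cvs :: "(complex \<Rightarrow> 'v::ab_group_add \<Rightarrow> 'v) \<Rightarrow> bool" where
  "cvs sc \<longleftrightarrow> (\<forall>a x y. sc a (x + y) = sc a x + sc a y) \<and> (\<forall>a b x. sc (a + b) x = sc a x + sc b x)
     \<and> (\<forall>a b x. sc a (sc b x) = sc (a * b) x) \<and> (\<forall>x. sc 1 x = x)"

definition cinner_space :: "(complex \<Rightarrow> 'v::ab_group_add \<Rightarrow> 'v) \<Rightarrow> ('v \<Rightarrow> 'v \<Rightarrow> complex) \<Rightarrow> bool" where
  "cinner_space sc ip \<longleftrightarrow> cvs sc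
     \<and> (\<forall>x y z. ip x (y + z) = ip x y + ip x z)
     \<and> (\<forall>a x y. ip x (sc a y) = a * ip x y)
     \<and> (\<forall>x y. ip y x = cnj (ip x y))
     \<and> (\<forall>x. Re (ip x x) \<ge> 0)
     \<and> (\<forall>x. ip x x = 0 \<longrightarrow> x = 0)"

definition cnorm :: "('v \<Rightarrow> 'v \<Rightarrow> complex) \<Rightarrow> 'v \<Rightarrow> real" where
  "cnorm ip x = sqrt (Re (ip x x))"

definition chilbert :: "(complex \<Rightarrow> 'v::ab_group_add \<Rightarrow> 'v) \<Rightarrow> ('v \<Rightarrow> 'v \<Rightarrow> complex) \<Rightarrow> bool" where
  "chilbert sc ip \<longleftrightarrow> cinner_space sc ip
     \<and> (\<forall>X. (\<forall>\<epsilon>>0. \<exists>N. \<forall>m\<ge>N. \<forall>n\<ge>N. cnorm ip (X m - X n) < \<epsilon>)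
           \<longrightarrow> (\<exists>x. (\<lambda>n. cnorm ip (X n - x)) \<longlonglongrightarrow> 0))"

definition conjugation :: "(complex \<Rightarrow> 'v::ab_group_add \<Rightarrow> 'v) \<Rightarrow> ('v \<Rightarrow> 'v \<Rightarrow> complex) \<Rightarrow> ('v \<Rightarrow> 'v) \<Rightarrow> bool" where
  "conjugation sc ip J \<longleftrightarrow> (\<forall>x y. J (x + y) = J x + J y) \<and> (\<forall>a x. J (sc a x) = sc (cnj a) (J x))
     \<and> (\<forall>x. J (J x) = x) \<and> (\<forall>f g. ip (J f) (J g) = ip g f)"

definition linear_on :: "(complex \<Rightarrow> 'v::ab_group_add \<Rightarrow> 'v) \<Rightarrow> 'v set \<Rightarrow> ('v \<Rightarrow> 'v) \<Rightarrow> bool" where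
  "linear_on sc S T \<longleftrightarrow> (\<forall>x\<in>S. \<forall>y\<in>S. T (x + y) = T x + T y) \<and> (\<forall>a. \<forall>x\<in>S. T (sc a x) = sc a (T x))"

definition bounded_on :: "(complex \<Rightarrow> 'v::ab_group_add \<Rightarrow> 'v) \<Rightarrow> ('v \<Rightarrow> 'v \<Rightarrow> complex) \<Rightarrow> 'v set \<Rightarrow> ('v \<Rightarrow> 'v) \<Rightarrow> bool" where
  "bounded_on sc ip S T \<longleftrightarrow> linear_on sc S T \<and> (\<exists>C. \<forall>x\<in>S. cnorm ip (T x) \<le> C * cnorm ip x)"

text \<open>is_adjoint ip B C means C = B^*, i.e. (C x, y) = (x, B y) for all x, y.\<close>
definition is_adjoint :: "('v \<Rightarrow> 'v \<Rightarrow> complex) \<Rightarrow> ('v \<Rightarrow> 'v) \<Rightarrow> ('v \<Rightarrow> 'v) \<Rightarrow> bool" where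
  "is_adjoint ip B C \<longleftrightarrow> (\<forall>x y. ip (C x) y = ip x (B y))"

definition op_bar :: "('v \<Rightarrow> 'v) \<Rightarrow> ('v \<Rightarrow> 'v) \<Rightarrow> ('v \<Rightarrow> 'v)" where
  "op_bar J A = (\<lambda>x. J (A (J x)))"

text \<open>A^T = A, where A^T = (bar A)^*.\<close>
definition transpose_selfadj :: "('v \<Rightarrow> 'v \<Rightarrow> complex) \<Rightarrow> ('v \<Rightarrow> 'v) \<Rightarrow> ('v \<Rightarrow> 'v) \<Rightarrow> bool" where
  "transpose_selfadj ip J A \<longleftrightarrow> is_adjoint ip (op_bar J A) A"

definition cons_system :: "('v::ab_group_add \<Rightarrow> 'v \<Rightarrow> complex) \<Rightarrow> (nat \<Rightarrow> 'v) \<Rightarrow> bool" where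
  "cons_system ip e \<longleftrightarrow> (\<forall>i j. ip (e i) (e j) = (if i = j then 1 else 0))
     \<and> (\<forall>x. (\<forall>j. ip (e j) x = 0) \<longrightarrow> x = 0)"

definition hilbert_schmidt :: "(complex \<Rightarrow> 'v::ab_group_add \<Rightarrow> 'v) \<Rightarrow> ('v \<Rightarrow> 'v \<Rightarrow> complex) \<Rightarrow> ('v \<Rightarrow> 'v) \<Rightarrow> bool" where
  "hilbert_schmidt sc ip A \<longleftrightarrow> bounded_on sc ip UNIV A
     \<and> (\<exists>f. cons_system ip f \<and> summable (\<lambda>j. (cnorm ip (A (f j)))\<^sup>2))"

definition cspan :: "(complex \<Rightarrow> 'v::ab_group_add \<Rightarrow> 'v) \<Rightarrow> 'v set \<Rightarrow> 'v set" where
  "cspan sc S = {x. \<exists>(k::nat) c v. (\<forall>i<k. v i \<in> S) \<and> x = (\<Sum>i<k. sc (c i) (v i))}"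

definition cclosure :: "('v::ab_group_add \<Rightarrow> 'v \<Rightarrow> complex) \<Rightarrow> 'v set \<Rightarrow> 'v set" where
  "cclosure ip S = {x. \<forall>\<epsilon>>0. \<exists>y\<in>S. cnorm ip (x - y) < \<epsilon>}"

text \<open>Vectors a^dagger(f_n) ... a^dagger(f_1) Omega (the list is [f_n, ..., f_1]).\<close>
definition creation_vectors :: "('l \<Rightarrow> 'f \<Rightarrow> 'f) \<Rightarrow> 'f \<Rightarrow> nat \<Rightarrow> 'f set" where
  "creation_vectors ad \<Omega> n = {foldr ad fs \<Omega> | fs. length fs = n}"

definition nparticle :: "(complex \<Rightarrow> 'f::ab_group_add \<Rightarrow> 'f) \<Rightarrow> ('f \<Rightarrow> 'f \<Rightarrow> complex) \<Rightarrow> ('l \<Rightarrow> 'f \<Rightarrow> 'f) \<Rightarrow> 'f \<Rightarrow> nat \<Rightarrow> 'f set" where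
  "nparticle scF ipF ad \<Omega> n = cclosure ipF (cspan scF (creation_vectors ad \<Omega> n))"

text \<open>The operators are total functions; on each closed n-particle space they are
  required to be bounded linear, i.e. there they are the bounded extensions used in the text.\<close>
definition fock_rep ::
  "(complex \<Rightarrow> 'l::ab_group_add \<Rightarrow> 'l) \<Rightarrow> ('l \<Rightarrow> 'l \<Rightarrow> complex) \<Rightarrow> ('l \<Rightarrow> 'l)
   \<Rightarrow> (complex \<Rightarrow> 'f::ab_group_add \<Rightarrow> 'f) \<Rightarrow> ('f \<Rightarrow> 'f \<Rightarrow> complex) \<Rightarrow> 'f set
   \<Rightarrow> ('l \<Rightarrow> 'f \<Rightarrow> 'f) \<Rightarrow> ('l \<Rightarrow> 'f \<Rightarrow> 'f) \<Rightarrow> 'f \<Rightarrow> bool" where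
  "fock_rep scL ipL J scF ipF D a ad \<Omega> \<longleftrightarrow>
     chilbert scF ipF
   \<and> (\<forall>x\<in>D. \<forall>y\<in>D. x + y \<in> D) \<and> (\<forall>c. \<forall>x\<in>D. scF c x \<in> D)
   \<and> cclosure ipF D = UNIV
   \<and> \<Omega> \<in> D
   \<and> (\<forall>f. \<forall>\<Phi>\<in>D. a f \<Phi> \<in> D \<and> ad f \<Phi> \<in> D)
   \<and> (\<forall>f. linear_on scF D (a f) \<and> linear_on scF D (ad f))
   \<and> (\<forall>f g. \<forall>\<Phi>\<in>D. a (f + g) \<Phi> = a f \<Phi> + a g \<Phi> \<and> ad (f + g) \<Phi> = ad f \<Phi> + ad g \<Phi>)
   \<and> (\<forall>c f. \<forall>\<Phi>\<in>D. a (scL c f) \<Phi> = scF c (a f \<Phi>) \<and> ad (scL c f) \<Phi> = scF c (ad f \<Phi>))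
   \<and> (\<forall>f g. \<forall>\<Phi>\<in>D. a f (a g \<Phi>) = a g (a f \<Phi>)
                  \<and> ad f (ad g \<Phi>) = ad g (ad f \<Phi>)
                  \<and> a f (ad g \<Phi>) - ad g (a f \<Phi>) = scF (ipL (J f) g) \<Phi>)
   \<and> (\<forall>f. \<forall>\<Phi>\<in>D. \<forall>\<Psi>\<in>D. ipF (a f \<Phi>) \<Psi> = ipF \<Phi> (ad (J f) \<Psi>))
   \<and> ipF \<Omega> \<Omega> = 1
   \<and> (\<forall>f. a f \<Omega> = 0)
   \<and> cclosure ipF (cspan scF (\<Union>n. creation_vectors ad \<Omega> n)) = UNIV
   \<and> (\<forall>n f. bounded_on scF ipF (nparticle scF ipF ad \<Omega> n) (a f)
           \<and> bounded_on scF ipF (nparticle scF ipF ad \<Omega> n) (ad f))"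

text \<open>Delta_M(A) = sum_{j=1}^M a(A e_j) a(bar e_j); here the system is indexed from 0.\<close>
definition Delta :: "('l \<Rightarrow> 'f \<Rightarrow> 'f::comm_monoid_add) \<Rightarrow> ('l \<Rightarrow> 'l) \<Rightarrow> ('l \<Rightarrow> 'l) \<Rightarrow> (nat \<Rightarrow> 'l) \<Rightarrow> nat \<Rightarrow> 'f \<Rightarrow> 'f" where
  "Delta a J A e M \<Psi> = (\<Sum>j<M. a (A (e j)) (a (J (e j)) \<Psi>))"

end

theory Submission
  imports Defs
begin

text \<open>Write \<open>s\<^sub>j = \<parallel>A e\<^sub>j\<parallel>\<^sup>2\<close>. If \<open>\<Sum> s\<^sub>j\<close> diverged, the Abel--Dini weights
  \<open>c\<^sub>k = 1 / (1 + s\<^sub>0 + \<dots> + s\<^sub>k)\<close> would make \<open>\<Sum> c\<^sub>k\<^sup>2 s\<^sub>k\<close> converge while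
  \<open>\<Sum> c\<^sub>k s\<^sub>k\<close> diverges. Since \<open>A\<^sup>T = A\<close>, the moduli \<open>|(J A e\<^sub>j, e\<^sub>k)|\<close> form a symmetric
  matrix, so Bessel's inequality along its rows and columns shows that the two-particle vectors
  \<open>w\<^sub>k = a\<^sup>\<dagger>(e\<^sub>k) a\<^sup>\<dagger>(J A e\<^sub>k) \<Omega>\<close> satisfy \<open>\<parallel>\<Sum> c\<^sub>k w\<^sub>k\<parallel>\<^sup>2 \<le> 2 \<Sum> c\<^sub>k\<^sup>2 s\<^sub>k\<close>; hence
  \<open>\<Psi> = \<Sum> c\<^sub>k w\<^sub>k\<close> lies in the two-particle space. The CCR give \<open>(\<Omega>, a(A e\<^sub>j) a(J e\<^sub>j) \<Psi>) = (w\<^sub>j, \<Psi>)\<close>,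
  whence \<open>Re (\<Omega>, \<Delta>\<^sub>M \<Psi>) \<ge> \<Sum>\<^bsub>k<M\<^esub> c\<^sub>k s\<^sub>k\<close> is unbounded in \<open>M\<close>, whereas the convergent
  sequence \<open>\<Delta>\<^sub>M \<Psi>\<close> is bounded.\<close>

section \<open>Abel--Dini weights\<close>

lemma sum_div_partial_sums_sq_le:
  fixes s :: "nat \<Rightarrow> real"
  assumes nonneg: "\<And>i. 0 \<le> s i"
  shows "(\<Sum>k<n. s k / (1 + (\<Sum>i<Suc k. s i))\<^sup>2) \<le> 1 - 1 / (1 + (\<Sum>i<n. s i))"
proof (induction n)
  case 0
  then show ?case by simp
next
  case (Suc n)
  define P where "P m = 1 + (\<Sum>i<m. s i)" for m
  have P_ge_1: "P m \<ge> 1" for m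
    unfolding P_def using nonneg by (simp add: sum_nonneg)
  have P_Suc: "P (Suc n) = P n + s n"
    unfolding P_def by simp
  have "s n / (P (Suc n))\<^sup>2 \<le> s n / (P n * P (Suc n))"
    using P_ge_1[of n] nonneg[of n]
    by (intro divide_left_mono) (auto simp: P_Suc power2_eq_square intro!: mult_right_mono mult_pos_pos)
  also have "\<dots> = 1 / P n - 1 / P (Suc n)"
    using P_ge_1[of n] nonneg[of n] by (simp add: P_Suc field_simps)
  finally show ?case
    using Suc unfolding P_def by simp
qed

lemma summable_div_partial_sums_sq:
  fixes s :: "nat \<Rightarrow> real"
  assumes nonneg: "\<And>i. 0 \<le> s i"
  shows "summable (\<lambda>k. s k / (1 + (\<Sum>i<Suc k. s i))\<^sup>2)"
proof (rule summableI_nonneg_bounded)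
  fix n
  show "0 \<le> s n / (1 + (\<Sum>i<Suc n. s i))\<^sup>2"
    using nonneg by simp
  have "0 \<le> 1 / (1 + (\<Sum>i<n. s i))"
    using nonneg by (simp add: sum_nonneg)
  then show "(\<Sum>k<n. s k / (1 + (\<Sum>i<Suc k. s i))\<^sup>2) \<le> 1"
    using sum_div_partial_sums_sq_le[where s = s and n = n, OF nonneg] by linarith
qed

lemma partial_sums_unbounded:
  fixes s :: "nat \<Rightarrow> real"
  assumes nonneg: "\<And>i. 0 \<le> s i" and diverges: "\<not> summable s"
  shows "\<exists>n. B < (\<Sum>i<n. s i)"
  using summableI_nonneg_bounded[of s B] nonneg diverges by (meson not_le)

text \<open>Each time the partial sums double, the sum below grows by at least \<open>1/2\<close>.\<close>

lemma sum_div_partial_sums_ge_half: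
  fixes s :: "nat \<Rightarrow> real"
  assumes nonneg: "\<And>i. 0 \<le> s i" and diverges: "\<not> summable s"
  shows "\<exists>M. real B / 2 \<le> (\<Sum>k<M. s k / (1 + (\<Sum>i<Suc k. s i)))"
proof (induction B)
  case 0
  show ?case by (auto intro!: exI[of _ 0])
next
  case (Suc B)
  define P where "P m = 1 + (\<Sum>i<m. s i)" for m
  have P_mono: "P m \<le> P n" if "m \<le> n" for m n
    unfolding P_def using nonneg that by (auto intro!: sum_mono2)
  have P_ge_1: "P n \<ge> 1" for n
    unfolding P_def using nonneg by (simp add: sum_nonneg)
  then have P_pos: "P n > 0" for n
    using less_le_trans zero_less_one by blast
  obtain M where M: "real B / 2 \<le> (\<Sum>k<M. s k / P (Suc k))"
    using Suc unfolding P_def by blast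
  obtain n0 where "2 * P M < P n0"
    using partial_sums_unbounded[where B = "2 * P M - 1", OF nonneg diverges] unfolding P_def by auto
  define n where "n = max n0 M"
  have "M \<le> n" and doubled: "2 * P M \<le> P n"
    using \<open>2 * P M < P n0\<close> P_mono[of n0 n] unfolding n_def by auto
  have "1 / 2 \<le> (P n - P M) / P n"
    using doubled P_ge_1[of n] by (simp add: field_simps)
  also have "(P n - P M) / P n = (\<Sum>k\<in>{M..<n}. s k / P n)"
    using \<open>M \<le> n\<close> unfolding P_def
    by (simp add: lessThan_atLeast0 sum.atLeastLessThan_concat[symmetric, of 0 M n] sum_divide_distrib)
  also have "\<dots> \<le> (\<Sum>k\<in>{M..<n}. s k / P (Suc k))"
    using nonneg P_pos P_mono by (intro sum_mono divide_left_mono) auto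
  finally have "real (Suc B) / 2 \<le> (\<Sum>k<M. s k / P (Suc k)) + (\<Sum>k\<in>{M..<n}. s k / P (Suc k))"
    using M by simp
  also have "\<dots> = (\<Sum>k<n. s k / P (Suc k))"
    using \<open>M \<le> n\<close> by (simp add: lessThan_atLeast0 sum.atLeastLessThan_concat)
  finally show ?case
    unfolding P_def by blast
qed

lemma sum_div_partial_sums_unbounded:
  fixes s :: "nat \<Rightarrow> real"
  assumes "\<And>i. 0 \<le> s i" and "\<not> summable s"
  shows "\<exists>M. B < (\<Sum>k<M. s k / (1 + (\<Sum>i<Suc k. s i)))"
proof -
  obtain N :: nat where "2 * B < real N"
    using reals_Archimedean2 by blast
  moreover obtain M where "real N / 2 \<le> (\<Sum>k<M. s k / (1 + (\<Sum>i<Suc k. s i)))"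
    using sum_div_partial_sums_ge_half[OF assms] by blast
  ultimately show ?thesis
    by (intro exI[of _ M]) linarith
qed

section \<open>Pre-Hilbert spaces\<close>

lemma cnj_mult_self: "cnj z * z = complex_of_real ((cmod z)\<^sup>2)"
  using complex_norm_square[of z] by (simp add: mult.commute)

locale pre_hilbert =
  fixes sc :: "complex \<Rightarrow> 'v::ab_group_add \<Rightarrow> 'v" and ip :: "'v \<Rightarrow> 'v \<Rightarrow> complex"
  assumes inner: "cinner_space sc ip"
begin

lemma scale_add_right: "sc c (x + y) = sc c x + sc c y"
  and scale_add_left: "sc (b + c) x = sc b x + sc c x"
  and scale_scale: "sc b (sc c x) = sc (b * c) x"
  and scale_one: "sc 1 x = x"
  using inner unfolding cinner_space_def cvs_def by blast+

lemma scale_zero_left: "sc 0 x = 0"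
  using scale_add_left[of 0 0 x] by simp

lemma scale_zero_right: "sc c 0 = 0"
  using scale_add_right[of c 0 0] by simp

lemma scale_minus_one: "sc (-1) x = - x"
  using scale_add_left[of 1 "-1" x] by (simp add: scale_one scale_zero_left add_eq_0_iff)

lemma scale_diff: "sc c (x - y) = sc c x - sc c y"
  using scale_add_right[of c "x - y" y] by (simp add: eq_diff_eq)

lemma scale_sum: "sc c (sum f K) = (\<Sum>i\<in>K. sc c (f i))"
  by (induction K rule: infinite_finite_induct) (simp_all add: scale_zero_right scale_add_right)

lemma ip_add_right: "ip x (y + z) = ip x y + ip x z"
  and ip_scale_right: "ip x (sc c y) = c * ip x y"
  and ip_cnj: "ip y x = cnj (ip x y)"
  and Re_ip_self_nonneg: "Re (ip x x) \<ge> 0"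
  using inner unfolding cinner_space_def by blast+

lemma ip_add_left: "ip (x + y) z = ip x z + ip y z"
  using ip_cnj[of "x + y" z] ip_add_right[of z x y] ip_cnj[of x z] ip_cnj[of y z] by simp

lemma ip_scale_left: "ip (sc c x) y = cnj c * ip x y"
  using ip_cnj[of "sc c x" y] ip_scale_right[of y c x] ip_cnj[of x y] by simp

lemma ip_zero_right [simp]: "ip x 0 = 0"
  using ip_add_right[of x 0 0] by simp

lemma ip_zero_left [simp]: "ip 0 x = 0"
  using ip_add_left[of 0 0 x] by simp

lemma ip_diff_right: "ip x (y - z) = ip x y - ip x z"
  using ip_add_right[of x "y - z" z] by simp

lemma ip_diff_left: "ip (x - y) z = ip x z - ip y z"
  using ip_add_left[of "x - y" y z] by simp

lemma ip_sum_right: "ip x (sum f K) = (\<Sum>i\<in>K. ip x (f i))"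
  by (induction K rule: infinite_finite_induct) (simp_all add: ip_add_right)

lemma ip_sum_left: "ip (sum f K) y = (\<Sum>i\<in>K. ip (f i) y)"
  by (induction K rule: infinite_finite_induct) (simp_all add: ip_add_left)

lemma ip_sum_scale_sum:
  "ip (\<Sum>j\<in>K. sc (c j) (u j)) (\<Sum>k\<in>K'. sc (d k) (v k))
     = (\<Sum>j\<in>K. \<Sum>k\<in>K'. cnj (c j) * d k * ip (u j) (v k))"
  by (simp add: ip_sum_left ip_sum_right ip_scale_left ip_scale_right sum_distrib_left
      mult.assoc mult.left_commute) (rule sum.swap)

lemma ip_self_real: "ip x x = complex_of_real (Re (ip x x))"
proof -
  have "Im (ip x x) = 0"
    using ip_cnj[of x x] by (metis complex_cnj_cancel_iff Reals_cnj_iff complex_is_Real_iff)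
  then show ?thesis by (simp add: complex_eq_iff)
qed

lemma cnorm_sq: "(cnorm ip x)\<^sup>2 = Re (ip x x)"
  unfolding cnorm_def using Re_ip_self_nonneg by simp

lemma cnorm_nonneg: "cnorm ip x \<ge> 0"
  unfolding cnorm_def using Re_ip_self_nonneg by simp

lemma cnorm_scale: "cnorm ip (sc c x) = cmod c * cnorm ip x"
proof -
  have "ip (sc c x) (sc c x) = complex_of_real ((cmod c)\<^sup>2) * ip x x"
    unfolding ip_scale_left ip_scale_right cnj_mult_self[symmetric] by (simp add: mult.assoc)
  then have "Re (ip (sc c x) (sc c x)) = (cmod c)\<^sup>2 * Re (ip x x)"
    by simp
  then show ?thesis
    unfolding cnorm_def by (simp add: real_sqrt_mult)
qed

lemma cnorm_commute: "cnorm ip (x - y) = cnorm ip (y - x)"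
  using cnorm_scale[of "-1" "x - y"] by (simp add: scale_minus_one)

lemma cauchy_schwarz: "cmod (ip x y) \<le> cnorm ip x * cnorm ip y"
proof (cases "Re (ip y y) = 0")
  case True
  then have "ip y y = 0" using ip_self_real by (metis of_real_0)
  then have "y = 0" using inner unfolding cinner_space_def by blast
  then show ?thesis by (simp add: cnorm_nonneg)
next
  case False
  define r where "r = Re (ip y y)"
  have r_pos: "r > 0" using False Re_ip_self_nonneg[of y] unfolding r_def by simp
  define l where "l = ip y x / complex_of_real r"
  have "0 \<le> Re (ip (x - sc l y) (x - sc l y))" by (rule Re_ip_self_nonneg)
  also have "ip (x - sc l y) (x - sc l y) = ip x x - l * ip x y - cnj l * ip y x + cnj l * l * ip y y"
    by (simp add: ip_diff_left ip_diff_right ip_scale_left ip_scale_right algebra_simps)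
  also have "\<dots> = ip x x - complex_of_real ((cmod (ip x y))\<^sup>2 / r)"
  proof -
    have "ip y x = cnj (ip x y)" by (rule ip_cnj)
    moreover have "ip y y = complex_of_real r" unfolding r_def by (rule ip_self_real)
    ultimately show ?thesis
      using r_pos cnj_mult_self[of "ip x y"] unfolding l_def by (simp add: field_simps)
  qed
  finally have "(cmod (ip x y))\<^sup>2 \<le> Re (ip x x) * r"
    using r_pos by (simp add: field_simps)
  also have "\<dots> = (cnorm ip x * cnorm ip y)\<^sup>2"
    unfolding r_def by (simp add: cnorm_sq power_mult_distrib)
  finally show ?thesis
    by (rule power2_le_imp_le) (simp add: cnorm_nonneg)
qed

lemma Re_ip_le_cnorm: "Re (ip x y) \<le> cnorm ip x * cnorm ip y"
  using cauchy_schwarz[of x y] complex_Re_le_cmod[of "ip x y"] by linarith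

lemma cnorm_triangle: "cnorm ip (x + y) \<le> cnorm ip x + cnorm ip y"
proof -
  have "ip (x + y) (x + y) = ip x x + ip y y + (ip x y + cnj (ip x y))"
    using ip_cnj[of y x] by (simp add: ip_add_left ip_add_right)
  then have "(cnorm ip (x + y))\<^sup>2 = (cnorm ip x)\<^sup>2 + (cnorm ip y)\<^sup>2 + 2 * Re (ip x y)"
    by (simp add: cnorm_sq)
  also have "\<dots> \<le> (cnorm ip x + cnorm ip y)\<^sup>2"
    using Re_ip_le_cnorm[of x y] by (simp add: power2_sum)
  finally show ?thesis
    by (rule power2_le_imp_le) (simp add: cnorm_nonneg)
qed

lemma cnorm_sum: "cnorm ip (sum f K) \<le> (\<Sum>i\<in>K. cnorm ip (f i))"
proof (induction K rule: infinite_finite_induct)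
  case (insert x F)
  then show ?case using cnorm_triangle[of "f x" "sum f F"] by simp
qed (simp_all add: cnorm_def)

lemma cnorm_eventually_le:
  assumes "(\<lambda>n. cnorm ip (X n - x)) \<longlonglongrightarrow> 0"
  shows "\<exists>N. \<forall>n\<ge>N. cnorm ip (X n) \<le> cnorm ip x + 1"
proof -
  obtain N where N: "\<forall>n\<ge>N. cnorm ip (X n - x) < 1"
    using LIMSEQ_D[OF assms, of 1] by (auto simp: abs_of_nonneg cnorm_nonneg)
  have "cnorm ip (X n) \<le> cnorm ip x + 1" if "n \<ge> N" for n
    using cnorm_triangle[of "X n - x" x] N that by fastforce
  then show ?thesis by blast
qed

lemma bessel_inequality:
  assumes orthonormal: "\<And>i j. ip (e i) (e j) = (if i = j then 1 else 0)" and "finite K"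
  shows "(\<Sum>j\<in>K. (cmod (ip (e j) x))\<^sup>2) \<le> Re (ip x x)"
proof -
  define y where "y = (\<Sum>j\<in>K. sc (ip (e j) x) (e j))"
  have sq: "cnj (ip (e j) x) * ip (e j) x = complex_of_real ((cmod (ip (e j) x))\<^sup>2)" for j
    by (rule cnj_mult_self)
  have xy: "ip x y = (\<Sum>j\<in>K. complex_of_real ((cmod (ip (e j) x))\<^sup>2))"
    unfolding y_def using sq
    by (simp add: ip_sum_right ip_scale_right ip_cnj[of x "e _"] mult.commute)
  have yx: "ip y x = (\<Sum>j\<in>K. complex_of_real ((cmod (ip (e j) x))\<^sup>2))"
    unfolding y_def using sq by (simp add: ip_sum_left ip_scale_left)
  have yy: "ip y y = (\<Sum>j\<in>K. complex_of_real ((cmod (ip (e j) x))\<^sup>2))"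
    unfolding y_def ip_sum_scale_sum orthonormal using \<open>finite K\<close> sq
    by (simp add: if_distrib[of "\<lambda>t. _ * t"] cong: if_cong)
  have "0 \<le> Re (ip (x - y) (x - y))" by (rule Re_ip_self_nonneg)
  also have "ip (x - y) (x - y) = ip x x - ip x y - ip y x + ip y y"
    by (simp add: ip_diff_left ip_diff_right)
  finally show ?thesis unfolding xy yx yy by (simp add: Re_sum)
qed

lemma series_converges:
  assumes complete: "chilbert sc ip" and "summable t"
    and bound: "\<And>m n. m \<le> n \<Longrightarrow> (cnorm ip (\<Sum>k\<in>{m..<n}. v k))\<^sup>2 \<le> (\<Sum>k\<in>{m..<n}. t k)"
  shows "\<exists>x. (\<lambda>n. cnorm ip ((\<Sum>k<n. v k) - x)) \<longlonglongrightarrow> 0"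
proof -
  define P where "P n = (\<Sum>k<n. v k)" for n
  have P_diff: "P n - P m = (\<Sum>k\<in>{m..<n}. v k)" if "m \<le> n" for m n
    using that by (simp add: P_def lessThan_atLeast0 sum.atLeastLessThan_concat[symmetric, of 0 m n])
  have cauchy: "\<exists>N. \<forall>m\<ge>N. \<forall>n\<ge>N. cnorm ip (P m - P n) < \<epsilon>" if "\<epsilon> > 0" for \<epsilon>
  proof -
    have "\<epsilon>\<^sup>2 > 0" using \<open>\<epsilon> > 0\<close> by simp
    then obtain N where N: "\<forall>m\<ge>N. \<forall>n. norm (\<Sum>k\<in>{m..<n}. t k) < \<epsilon>\<^sup>2"
      using \<open>summable t\<close> unfolding summable_Cauchy by blast
    have close: "cnorm ip (P n - P m) < \<epsilon>" if "N \<le> m" "m \<le> n" for m n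
    proof -
      have "norm (\<Sum>k\<in>{m..<n}. t k) < \<epsilon>\<^sup>2"
        using N that(1) by blast
      then have "(cnorm ip (P n - P m))\<^sup>2 < \<epsilon>\<^sup>2"
        using bound[OF that(2)] P_diff[OF that(2)] by simp
      then show ?thesis using \<open>\<epsilon> > 0\<close> by (simp add: power_less_imp_less_base)
    qed
    show ?thesis
    proof (intro exI allI impI)
      fix m n assume "N \<le> m" "N \<le> n"
      then show "cnorm ip (P m - P n) < \<epsilon>"
        using close[of m n] close[of n m] cnorm_commute[of "P m" "P n"] by (cases "m \<le> n") auto
    qed
  qed
  have "\<exists>x. (\<lambda>n. cnorm ip (P n - x)) \<longlonglongrightarrow> 0"
    using complete cauchy unfolding chilbert_def by blast
  then show ?thesis unfolding P_def .
qed

lemma cspan_base: "x \<in> S \<Longrightarrow> x \<in> cspan sc S"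
  unfolding cspan_def using scale_one
  by (auto intro!: exI[of _ 1] exI[of _ "\<lambda>_. 1"] exI[of _ "\<lambda>_. x"])

lemma cspan_add:
  assumes "x \<in> cspan sc S" and "y \<in> cspan sc S"
  shows "x + y \<in> cspan sc S"
proof -
  obtain k :: nat and c u where u: "\<forall>i<k. u i \<in> S" and x: "x = (\<Sum>i<k. sc (c i) (u i))"
    using assms(1) unfolding cspan_def by blast
  obtain k' :: nat and c' u' where u': "\<forall>i<k'. u' i \<in> S" and y: "y = (\<Sum>i<k'. sc (c' i) (u' i))"
    using assms(2) unfolding cspan_def by blast
  define d where "d i = (if i < k then c i else c' (i - k))" for i
  define w where "w i = (if i < k then u i else u' (i - k))" for i
  have "(\<Sum>i<k + k'. sc (d i) (w i)) = (\<Sum>i\<in>{0..<k}. sc (d i) (w i)) + (\<Sum>i\<in>{k..<k + k'}. sc (d i) (w i))"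
    by (simp add: lessThan_atLeast0 sum.atLeastLessThan_concat)
  also have "(\<Sum>i\<in>{k..<k + k'}. sc (d i) (w i)) = (\<Sum>i\<in>{0..<k'}. sc (d (i + k)) (w (i + k)))"
    using sum.shift_bounds_nat_ivl[of "\<lambda>i. sc (d i) (w i)" 0 k k'] by (simp add: add.commute)
  also have "(\<Sum>i\<in>{0..<k}. sc (d i) (w i)) + \<dots> = x + y"
    unfolding x y d_def w_def by (simp add: lessThan_atLeast0)
  finally have "x + y = (\<Sum>i<k + k'. sc (d i) (w i))" ..
  moreover have "\<forall>i<k + k'. w i \<in> S"
    using u u' unfolding w_def by auto
  ultimately show ?thesis
    unfolding cspan_def by blast
qed

lemma cspan_scale:
  assumes "x \<in> cspan sc S"
  shows "sc c x \<in> cspan sc S"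
proof -
  obtain k :: nat and d u where u: "\<forall>i<k. u i \<in> S" and x: "x = (\<Sum>i<k. sc (d i) (u i))"
    using assms unfolding cspan_def by blast
  have "sc c x = (\<Sum>i<k. sc (c * d i) (u i))"
    unfolding x by (simp add: scale_sum scale_scale)
  then show ?thesis
    using u unfolding cspan_def by (intro CollectI exI[of _ k] exI[of _ "\<lambda>i. c * d i"] exI[of _ u]) simp
qed

lemma cspan_sum: "(\<And>i. i \<in> K \<Longrightarrow> f i \<in> cspan sc S) \<Longrightarrow> sum f K \<in> cspan sc S"
proof (induction K rule: infinite_finite_induct)
  case (infinite K)
  then show ?case unfolding cspan_def by (auto intro!: exI[of _ 0])
next
  case empty
  then show ?case unfolding cspan_def by (auto intro!: exI[of _ 0])
qed (simp add: cspan_add)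

lemma cclosure_base: "x \<in> S \<Longrightarrow> x \<in> cclosure ip S"
  unfolding cclosure_def by (auto intro!: bexI[of _ x] simp: cnorm_def)

lemma cclosure_limit:
  assumes "\<And>n. X n \<in> S" and "(\<lambda>n. cnorm ip (X n - x)) \<longlonglongrightarrow> 0"
  shows "x \<in> cclosure ip S"
  unfolding cclosure_def
proof (intro CollectI allI impI)
  fix \<epsilon> :: real assume "\<epsilon> > 0"
  then obtain N where "\<forall>n\<ge>N. norm (cnorm ip (X n - x) - 0) < \<epsilon>"
    using LIMSEQ_D[OF assms(2)] by blast
  then have "cnorm ip (X N - x) < \<epsilon>"
    by (simp add: abs_of_nonneg cnorm_nonneg)
  then have "cnorm ip (x - X N) < \<epsilon>"
    by (subst cnorm_commute)
  then show "\<exists>y\<in>S. cnorm ip (x - y) < \<epsilon>"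
    using assms(1) by blast
qed

lemma cclosure_lipschitz_image:
  assumes x: "x \<in> cclosure ip S" and maps: "\<And>y. y \<in> S \<Longrightarrow> T y \<in> S'"
    and lipschitz: "\<And>y. y \<in> S \<Longrightarrow> cnorm ip (T x - T y) \<le> C * cnorm ip (x - y)"
  shows "T x \<in> cclosure ip S'"
  unfolding cclosure_def
proof (intro CollectI allI impI)
  fix \<epsilon> :: real assume "\<epsilon> > 0"
  then have "\<epsilon> / (\<bar>C\<bar> + 1) > 0" by simp
  then obtain y where y: "y \<in> S" "cnorm ip (x - y) < \<epsilon> / (\<bar>C\<bar> + 1)"
    using x unfolding cclosure_def by blast
  have "cnorm ip (T x - T y) \<le> (\<bar>C\<bar> + 1) * cnorm ip (x - y)"
    using lipschitz[OF y(1)] cnorm_nonneg[of "x - y"]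
    by (smt (verit) mult_right_mono abs_ge_self)
  also have "\<dots> < \<epsilon>"
    using y(2) by (simp add: pos_less_divide_eq mult.commute add_pos_nonneg)
  finally show "\<exists>z\<in>S'. cnorm ip (T x - z) < \<epsilon>"
    using maps[OF y(1)] by blast
qed

lemma cclosure_cspan_scale:
  assumes "x \<in> cclosure ip (cspan sc S)"
  shows "sc c x \<in> cclosure ip (cspan sc S)"
  by (rule cclosure_lipschitz_image[OF assms, where T = "sc c" and C = "cmod c"])
    (simp_all add: cspan_scale cnorm_scale flip: scale_diff)

lemma cclosure_cspan_add:
  assumes x: "x \<in> cclosure ip (cspan sc S)" and y: "y \<in> cclosure ip (cspan sc S)"
  shows "x + y \<in> cclosure ip (cspan sc S)"
  unfolding cclosure_def
proof (intro CollectI allI impI)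
  fix \<epsilon> :: real assume "\<epsilon> > 0"
  then have "\<epsilon> / 2 > 0" by simp
  then obtain x' y' where x': "x' \<in> cspan sc S" "cnorm ip (x - x') < \<epsilon> / 2"
    and y': "y' \<in> cspan sc S" "cnorm ip (y - y') < \<epsilon> / 2"
    using x y unfolding cclosure_def by blast
  have "cnorm ip ((x + y) - (x' + y')) \<le> cnorm ip (x - x') + cnorm ip (y - y')"
    using cnorm_triangle[of "x - x'" "y - y'"] by (simp add: algebra_simps)
  then have "cnorm ip ((x + y) - (x' + y')) < \<epsilon>"
    using x'(2) y'(2) by linarith
  then show "\<exists>z\<in>cspan sc S. cnorm ip (x + y - z) < \<epsilon>"
    using cspan_add[OF x'(1) y'(1)] by blast
qed

lemma cclosure_cspan_diff:
  "x \<in> cclosure ip (cspan sc S) \<Longrightarrow> y \<in> cclosure ip (cspan sc S) \<Longrightarrow> x - y \<in> cclosure ip (cspan sc S)"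
  using cclosure_cspan_add[where y = "sc (-1) y"] cclosure_cspan_scale[where c = "-1"]
  by (simp add: scale_minus_one)

end


section \<open>Fock representations\<close>

locale fock_space = L: pre_hilbert scL ipL
  for scL :: "complex \<Rightarrow> 'l::ab_group_add \<Rightarrow> 'l" and ipL :: "'l \<Rightarrow> 'l \<Rightarrow> complex" +
  fixes J :: "'l \<Rightarrow> 'l"
    and scF :: "complex \<Rightarrow> 'f::ab_group_add \<Rightarrow> 'f" and ipF :: "'f \<Rightarrow> 'f \<Rightarrow> complex"
    and D :: "'f set" and a ad :: "'l \<Rightarrow> 'f \<Rightarrow> 'f" and \<Omega> :: 'f
  assumes conjugation: "conjugation scL ipL J"
    and fock: "fock_rep scL ipL J scF ipF D a ad \<Omega>"
begin

lemma F_complete: "chilbert scF ipF"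
  using fock unfolding fock_rep_def by blast

sublocale F: pre_hilbert scF ipF
  using F_complete unfolding chilbert_def pre_hilbert_def by blast

abbreviation npart :: "nat \<Rightarrow> 'f set" where
  "npart n \<equiv> nparticle scF ipF ad \<Omega> n"

lemma J_J [simp]: "J (J f) = f"
  and ipL_J_J: "ipL (J f) (J g) = ipL g f"
  using conjugation unfolding conjugation_def by blast+

lemma D_add: "\<Phi> \<in> D \<Longrightarrow> \<Psi> \<in> D \<Longrightarrow> \<Phi> + \<Psi> \<in> D"
  and D_scale: "\<Phi> \<in> D \<Longrightarrow> scF c \<Phi> \<in> D"
  and Omega_in_D: "\<Omega> \<in> D"
  and a_in_D: "\<Phi> \<in> D \<Longrightarrow> a f \<Phi> \<in> D"
  and ad_in_D: "\<Phi> \<in> D \<Longrightarrow> ad f \<Phi> \<in> D"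
  and a_adjoint: "\<Phi> \<in> D \<Longrightarrow> \<Psi> \<in> D \<Longrightarrow> ipF (a f \<Phi>) \<Psi> = ipF \<Phi> (ad (J f) \<Psi>)"
  and Omega_normalized: "ipF \<Omega> \<Omega> = 1"
  and a_Omega: "a f \<Omega> = 0"
  and a_bounded_on_npart: "bounded_on scF ipF (npart n) (a f)"
  using fock unfolding fock_rep_def by simp_all

lemma a_add: "\<Phi> \<in> D \<Longrightarrow> \<Psi> \<in> D \<Longrightarrow> a f (\<Phi> + \<Psi>) = a f \<Phi> + a f \<Psi>"
  and a_scale: "\<Phi> \<in> D \<Longrightarrow> a f (scF c \<Phi>) = scF c (a f \<Phi>)"
  and ad_add: "\<Phi> \<in> D \<Longrightarrow> \<Psi> \<in> D \<Longrightarrow> ad f (\<Phi> + \<Psi>) = ad f \<Phi> + ad f \<Psi>"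
  and ad_scale: "\<Phi> \<in> D \<Longrightarrow> ad f (scF c \<Phi>) = scF c (ad f \<Phi>)"
  and a_ad_commutator: "\<Phi> \<in> D \<Longrightarrow> a f (ad g \<Phi>) - ad g (a f \<Phi>) = scF (ipL (J f) g) \<Phi>"
  using fock unfolding fock_rep_def linear_on_def by simp_all

lemma D_zero: "0 \<in> D"
  using D_scale[OF Omega_in_D, of 0] by (simp add: F.scale_zero_left)

lemma a_zero: "a f 0 = 0"
  using a_add[OF D_zero D_zero, of f] by simp

lemma ad_zero: "ad f 0 = 0"
  using ad_add[OF D_zero D_zero, of f] by simp

lemma D_sum: "(\<And>i. i \<in> K \<Longrightarrow> v i \<in> D) \<Longrightarrow> sum v K \<in> D"
  by (induction K rule: infinite_finite_induct) (simp_all add: D_zero D_add)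

lemma a_sum: "(\<And>i. i \<in> K \<Longrightarrow> v i \<in> D) \<Longrightarrow> a f (sum v K) = (\<Sum>i\<in>K. a f (v i))"
  by (induction K rule: infinite_finite_induct) (simp_all add: a_zero a_add D_sum)

lemma a_ad_Omega: "a f (ad g \<Omega>) = scF (ipL (J f) g) \<Omega>"
  using a_ad_commutator[OF Omega_in_D, of f g] by (simp add: a_Omega ad_zero)

lemma a_ad_ad_Omega:
  "a f (ad g (ad h \<Omega>)) = scF (ipL (J f) h) (ad g \<Omega>) + scF (ipL (J f) g) (ad h \<Omega>)"
  using a_ad_commutator[OF ad_in_D[OF Omega_in_D], of f g h]
  by (simp add: a_ad_Omega ad_scale[OF Omega_in_D] algebra_simps)

lemma ip_ad_left:
  assumes "\<Phi> \<in> D" and "\<Psi> \<in> D"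
  shows "ipF (ad f \<Phi>) \<Psi> = ipF \<Phi> (a (J f) \<Psi>)"
proof -
  have "ipF (ad f \<Phi>) \<Psi> = cnj (ipF \<Psi> (ad f \<Phi>))"
    by (rule F.ip_cnj)
  also have "ipF \<Psi> (ad f \<Phi>) = ipF (a (J f) \<Psi>) \<Phi>"
    using a_adjoint[OF assms(2,1), of "J f"] by simp
  also have "cnj \<dots> = ipF \<Phi> (a (J f) \<Psi>)"
    using F.ip_cnj[where x = "a (J f) \<Psi>" and y = \<Phi>] by simp
  finally show ?thesis .
qed

lemma ip_ad_Omega: "ipF (ad g \<Omega>) (ad h \<Omega>) = ipL g h"
  using ip_ad_left[OF Omega_in_D ad_in_D[OF Omega_in_D], of g h]
  by (simp add: a_ad_Omega F.ip_scale_right Omega_normalized)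

lemma ip_ad_ad_Omega:
  "ipF (ad f (ad g \<Omega>)) (ad h (ad k \<Omega>)) = ipL f k * ipL g h + ipL f h * ipL g k"
  using ip_ad_left[OF ad_in_D[OF Omega_in_D] ad_in_D[OF ad_in_D[OF Omega_in_D]], of f g h k]
  by (simp add: a_ad_ad_Omega F.ip_add_right F.ip_scale_right ip_ad_Omega)

lemma ip_Omega_a_a:
  assumes "\<Phi> \<in> D"
  shows "ipF \<Omega> (a f (a g \<Phi>)) = ipF (ad (J g) (ad (J f) \<Omega>)) \<Phi>"
proof -
  have "ipF \<Omega> (a f (a g \<Phi>)) = cnj (ipF (a f (a g \<Phi>)) \<Omega>)"
    by (rule F.ip_cnj)
  also have "ipF (a f (a g \<Phi>)) \<Omega> = ipF (a g \<Phi>) (ad (J f) \<Omega>)"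
    by (rule a_adjoint[OF a_in_D[OF assms] Omega_in_D])
  also have "\<dots> = ipF \<Phi> (ad (J g) (ad (J f) \<Omega>))"
    by (rule a_adjoint[OF assms ad_in_D[OF Omega_in_D]])
  also have "cnj \<dots> = ipF (ad (J g) (ad (J f) \<Omega>)) \<Phi>"
    using F.ip_cnj[where x = \<Phi> and y = "ad (J g) (ad (J f) \<Omega>)"] by simp
  finally show ?thesis .
qed

lemma abs_Re_ip_Omega_le_cnorm: "\<bar>Re (ipF \<Omega> \<Phi>)\<bar> \<le> cnorm ipF \<Phi>"
proof -
  have "cnorm ipF \<Omega> = 1"
    unfolding cnorm_def by (simp add: Omega_normalized)
  then have "cmod (ipF \<Omega> \<Phi>) \<le> cnorm ipF \<Phi>"
    using F.cauchy_schwarz[of \<Omega> \<Phi>] by simp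
  then show ?thesis
    using abs_Re_le_cmod[of "ipF \<Omega> \<Phi>"] by linarith
qed

lemma creation_vectors_1I: "ad g \<Omega> \<in> creation_vectors ad \<Omega> 1"
  unfolding creation_vectors_def by (auto intro!: exI[of _ "[g]"])

lemma creation_vectors_2I: "ad g (ad h \<Omega>) \<in> creation_vectors ad \<Omega> 2"
  unfolding creation_vectors_def by (auto intro!: exI[of _ "[g, h]"])

lemma creation_vectors_2E:
  assumes "v \<in> creation_vectors ad \<Omega> 2"
  obtains g h where "v = ad g (ad h \<Omega>)"
proof -
  obtain fs where "v = foldr ad fs \<Omega>" and "length fs = 2"
    using assms unfolding creation_vectors_def by blast
  moreover from \<open>length fs = 2\<close> obtain g h where "fs = [g, h]"
    by (metis (no_types) One_nat_def Suc_1 length_0_conv length_Suc_conv)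
  ultimately show thesis
    using that by simp
qed

lemma npart_diff: "\<Phi> \<in> npart n \<Longrightarrow> \<Psi> \<in> npart n \<Longrightarrow> \<Phi> - \<Psi> \<in> npart n"
  unfolding nparticle_def by (rule F.cclosure_cspan_diff)

lemma cspan_in_npart: "\<Phi> \<in> cspan scF (creation_vectors ad \<Omega> n) \<Longrightarrow> \<Phi> \<in> npart n"
  unfolding nparticle_def by (rule F.cclosure_base)

lemma a_diff_npart:
  assumes "\<Phi> \<in> npart n" and "\<Psi> \<in> npart n"
  shows "a f \<Phi> - a f \<Psi> = a f (\<Phi> - \<Psi>)"
proof -
  have "a f ((\<Phi> - \<Psi>) + \<Psi>) = a f (\<Phi> - \<Psi>) + a f \<Psi>"
    using a_bounded_on_npart[of n f] npart_diff[OF assms] assms(2)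
    unfolding bounded_on_def linear_on_def by blast
  then show ?thesis
    by (simp add: eq_diff_eq)
qed

lemma a_norm_bound_npart: "\<exists>C\<ge>0. \<forall>\<Phi>\<in>npart n. cnorm ipF (a f \<Phi>) \<le> C * cnorm ipF \<Phi>"
proof -
  obtain C where C: "\<forall>\<Phi>\<in>npart n. cnorm ipF (a f \<Phi>) \<le> C * cnorm ipF \<Phi>"
    using a_bounded_on_npart[of n f] unfolding bounded_on_def by blast
  have "C * cnorm ipF \<Phi> \<le> max C 0 * cnorm ipF \<Phi>" for \<Phi>
    using F.cnorm_nonneg by (intro mult_right_mono) auto
  then show ?thesis
    using C by (intro exI[of _ "max C 0"]) (auto intro: order_trans)
qed

lemma a_maps_cspan_2_to_1:
  assumes "\<Phi> \<in> cspan scF (creation_vectors ad \<Omega> 2)"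
  shows "a f \<Phi> \<in> cspan scF (creation_vectors ad \<Omega> 1)"
proof -
  obtain k :: nat and c v where v: "\<forall>i<k. v i \<in> creation_vectors ad \<Omega> 2"
    and \<Phi>: "\<Phi> = (\<Sum>i<k. scF (c i) (v i))"
    using assms unfolding cspan_def by blast
  have v_D: "v i \<in> D" if "i < k" for i
  proof -
    from v that have "v i \<in> creation_vectors ad \<Omega> 2" by blast
    then obtain g h where "v i = ad g (ad h \<Omega>)"
      by (rule creation_vectors_2E)
    then show ?thesis
      by (simp add: ad_in_D Omega_in_D)
  qed
  have a_v: "a f (v i) \<in> cspan scF (creation_vectors ad \<Omega> 1)" if "i < k" for i
  proof -
    from v that have "v i \<in> creation_vectors ad \<Omega> 2" by blast
    then obtain g h where "v i = ad g (ad h \<Omega>)"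
      by (rule creation_vectors_2E)
    then have "a f (v i) = scF (ipL (J f) h) (ad g \<Omega>) + scF (ipL (J f) g) (ad h \<Omega>)"
      by (simp add: a_ad_ad_Omega)
    also have "\<dots> \<in> cspan scF (creation_vectors ad \<Omega> 1)"
      by (intro F.cspan_add F.cspan_scale F.cspan_base creation_vectors_1I)
    finally show ?thesis .
  qed
  have "a f \<Phi> = (\<Sum>i<k. a f (scF (c i) (v i)))"
    unfolding \<Phi> by (rule a_sum) (simp add: D_scale v_D)
  also have "\<dots> = (\<Sum>i<k. scF (c i) (a f (v i)))"
    by (rule sum.cong) (simp_all add: a_scale v_D)
  also have "\<dots> \<in> cspan scF (creation_vectors ad \<Omega> 1)"
    using a_v by (intro F.cspan_sum F.cspan_scale) simp
  finally show ?thesis .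
qed

lemma a_maps_npart_2_to_1: "\<Phi> \<in> npart 2 \<Longrightarrow> a f \<Phi> \<in> npart 1"
proof -
  assume \<Phi>: "\<Phi> \<in> npart 2"
  obtain C where C: "\<forall>\<Psi>\<in>npart 2. cnorm ipF (a f \<Psi>) \<le> C * cnorm ipF \<Psi>"
    using a_norm_bound_npart by blast
  show ?thesis
    unfolding nparticle_def
  proof (rule F.cclosure_lipschitz_image[where x = \<Phi> and T = "a f" and C = C])
    show "\<Phi> \<in> cclosure ipF (cspan scF (creation_vectors ad \<Omega> 2))"
      using \<Phi> unfolding nparticle_def .
  next
    fix \<Psi> assume "\<Psi> \<in> cspan scF (creation_vectors ad \<Omega> 2)"
    then show "a f \<Psi> \<in> cspan scF (creation_vectors ad \<Omega> 1)"
      by (rule a_maps_cspan_2_to_1)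
  next
    fix \<Psi> assume \<Psi>: "\<Psi> \<in> cspan scF (creation_vectors ad \<Omega> 2)"
    show "cnorm ipF (a f \<Phi> - a f \<Psi>) \<le> C * cnorm ipF (\<Phi> - \<Psi>)"
      using C \<Phi> cspan_in_npart[OF \<Psi>] by (simp add: a_diff_npart npart_diff)
  qed
qed

lemma a_a_diff_npart:
  assumes "\<Phi> \<in> npart 2" and "\<Psi> \<in> npart 2"
  shows "a f (a g \<Phi>) - a f (a g \<Psi>) = a f (a g (\<Phi> - \<Psi>))"
  using a_diff_npart[OF a_maps_npart_2_to_1[OF assms(1)] a_maps_npart_2_to_1[OF assms(2)]] a_diff_npart[OF assms]
  by simp

lemma a_a_norm_bound_npart: "\<exists>C\<ge>0. \<forall>\<Phi>\<in>npart 2. cnorm ipF (a f (a g \<Phi>)) \<le> C * cnorm ipF \<Phi>"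
proof -
  obtain C1 where "C1 \<ge> 0" and C1: "\<forall>\<Phi>\<in>npart 2. cnorm ipF (a g \<Phi>) \<le> C1 * cnorm ipF \<Phi>"
    using a_norm_bound_npart by blast
  obtain C2 where "C2 \<ge> 0" and C2: "\<forall>\<Phi>\<in>npart 1. cnorm ipF (a f \<Phi>) \<le> C2 * cnorm ipF \<Phi>"
    using a_norm_bound_npart by blast
  have "cnorm ipF (a f (a g \<Phi>)) \<le> (C2 * C1) * cnorm ipF \<Phi>" if "\<Phi> \<in> npart 2" for \<Phi>
  proof -
    have "cnorm ipF (a f (a g \<Phi>)) \<le> C2 * cnorm ipF (a g \<Phi>)"
      using C2 a_maps_npart_2_to_1[OF that] by blast
    also have "\<dots> \<le> C2 * (C1 * cnorm ipF \<Phi>)"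
      using C1 that \<open>C2 \<ge> 0\<close> by (intro mult_left_mono) auto
    finally show ?thesis by (simp add: mult.assoc)
  qed
  then show ?thesis
    using \<open>C1 \<ge> 0\<close> \<open>C2 \<ge> 0\<close> by (intro exI[of _ "C2 * C1"]) auto
qed

lemma Delta_diff_npart:
  "\<Phi> \<in> npart 2 \<Longrightarrow> \<Psi> \<in> npart 2 \<Longrightarrow> Delta a J A e M \<Phi> - Delta a J A e M \<Psi> = Delta a J A e M (\<Phi> - \<Psi>)"
  unfolding Delta_def by (simp add: a_a_diff_npart flip: sum_subtractf)

lemma Delta_norm_bound_npart: "\<exists>K. \<forall>\<Phi>\<in>npart 2. cnorm ipF (Delta a J A e M \<Phi>) \<le> K * cnorm ipF \<Phi>"
proof -
  have "\<forall>j. \<exists>C. \<forall>\<Phi>\<in>npart 2. cnorm ipF (a (A (e j)) (a (J (e j)) \<Phi>)) \<le> C * cnorm ipF \<Phi>"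
    using a_a_norm_bound_npart by blast
  then obtain C where C: "\<forall>j. \<forall>\<Phi>\<in>npart 2. cnorm ipF (a (A (e j)) (a (J (e j)) \<Phi>)) \<le> C j * cnorm ipF \<Phi>"
    by (auto simp: choice_iff)
  have "cnorm ipF (Delta a J A e M \<Phi>) \<le> (\<Sum>j<M. C j) * cnorm ipF \<Phi>" if "\<Phi> \<in> npart 2" for \<Phi>
  proof -
    have "cnorm ipF (Delta a J A e M \<Phi>) \<le> (\<Sum>j<M. cnorm ipF (a (A (e j)) (a (J (e j)) \<Phi>)))"
      unfolding Delta_def by (rule F.cnorm_sum)
    also have "\<dots> \<le> (\<Sum>j<M. C j * cnorm ipF \<Phi>)"
      using C that by (intro sum_mono) blast
    finally show ?thesis
      by (simp add: sum_distrib_right)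
  qed
  then show ?thesis by blast
qed

lemma Re_ip_Omega_Delta_tendsto:
  assumes "\<And>n. X n \<in> npart 2" and "\<Psi> \<in> npart 2" and "(\<lambda>n. cnorm ipF (X n - \<Psi>)) \<longlonglongrightarrow> 0"
  shows "(\<lambda>n. Re (ipF \<Omega> (Delta a J A e M (X n)))) \<longlonglongrightarrow> Re (ipF \<Omega> (Delta a J A e M \<Psi>))"
proof -
  obtain K where K: "\<forall>\<Phi>\<in>npart 2. cnorm ipF (Delta a J A e M \<Phi>) \<le> K * cnorm ipF \<Phi>"
    using Delta_norm_bound_npart by blast
  define d where "d n = Re (ipF \<Omega> (Delta a J A e M (X n))) - Re (ipF \<Omega> (Delta a J A e M \<Psi>))" for n
  have bound: "\<bar>d n\<bar> \<le> K * cnorm ipF (X n - \<Psi>)" for n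
  proof -
    have "d n = Re (ipF \<Omega> (Delta a J A e M (X n - \<Psi>)))"
      unfolding d_def using assms(1,2) by (simp add: F.ip_diff_right flip: Delta_diff_npart)
    also have "\<bar>\<dots>\<bar> \<le> cnorm ipF (Delta a J A e M (X n - \<Psi>))"
      by (rule abs_Re_ip_Omega_le_cnorm)
    also have "\<dots> \<le> K * cnorm ipF (X n - \<Psi>)"
      using K npart_diff[OF assms(1,2)] by blast
    finally show ?thesis .
  qed
  have "(\<lambda>n. \<bar>d n\<bar>) \<longlonglongrightarrow> 0"
  proof (rule real_tendsto_sandwich[where f = "\<lambda>_. 0" and h = "\<lambda>n. K * cnorm ipF (X n - \<Psi>)"])
    show "(\<lambda>n. K * cnorm ipF (X n - \<Psi>)) \<longlonglongrightarrow> 0"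
      using tendsto_mult[OF tendsto_const assms(3), of K] by simp
  qed (simp_all add: bound)
  then have "d \<longlonglongrightarrow> 0"
    by (simp add: tendsto_rabs_zero_iff)
  then show ?thesis
    unfolding d_def by (rule LIM_zero_cancel)
qed

end

section \<open>Transpose-symmetric operators\<close>

locale fock_transpose_symmetric = fock_space +
  fixes A and e
  assumes transpose_symmetric: "transpose_selfadj ipL J A"
    and complete_orthonormal: "cons_system ipL e"
begin

definition hs_term :: "nat \<Rightarrow> real" where
  "hs_term j = (cnorm ipL (A (e j)))\<^sup>2"

definition pair_vector where
  "pair_vector k = ad (e k) (ad (J (A (e k))) \<Omega>)"

definition coeff :: "nat \<Rightarrow> nat \<Rightarrow> real" where
  "coeff j k = cmod (ipL (J (A (e j))) (e k))"

lemma orthonormal: "ipL (e i) (e j) = (if i = j then 1 else 0)"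
  using complete_orthonormal unfolding cons_system_def by blast

text \<open>\<open>A\<^sup>T = A\<close> says exactly that the bilinear form \<open>(J (A f), g)\<close> is symmetric.\<close>

lemma ip_J_A_sym: "ipL (J (A f)) g = ipL (J (A g)) f"
proof -
  have adjoint: "ipL (A u) v = ipL u (J (A (J v)))" for u v
    using transpose_symmetric unfolding transpose_selfadj_def is_adjoint_def op_bar_def by blast
  have "ipL (J (A f)) g = ipL (J (A f)) (J (J g))" by simp
  also have "\<dots> = ipL (J g) (A f)" by (rule ipL_J_J)
  also have "\<dots> = cnj (ipL (A f) (J g))" by (rule L.ip_cnj)
  also have "ipL (A f) (J g) = ipL f (J (A g))" using adjoint[of f "J g"] by simp
  also have "cnj \<dots> = ipL (J (A g)) f" using L.ip_cnj[where x = f and y = "J (A g)"] by simp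
  finally show ?thesis .
qed

lemma hs_term_nonneg: "hs_term j \<ge> 0"
  unfolding hs_term_def by simp

lemma ip_J_A_self: "ipL (J (A (e j))) (J (A (e j))) = complex_of_real (hs_term j)"
  unfolding hs_term_def L.cnorm_sq ipL_J_J by (rule L.ip_self_real)

lemma ip_pair_vector:
  "ipF (pair_vector j) (pair_vector k) = complex_of_real ((coeff j k)\<^sup>2 + (if j = k then hs_term k else 0))"
proof -
  have "ipL (e j) (J (A (e k))) = cnj (ipL (J (A (e j))) (e k))"
    using L.ip_cnj[where x = "J (A (e k))" and y = "e j"] ip_J_A_sym[of "e k" "e j"] by simp
  then have "ipL (e j) (J (A (e k))) * ipL (J (A (e j))) (e k) = complex_of_real ((coeff j k)\<^sup>2)"
    unfolding coeff_def by (simp add: cnj_mult_self)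
  then show ?thesis
    unfolding pair_vector_def ip_ad_ad_Omega by (simp add: orthonormal ip_J_A_self)
qed

lemma sum_coeff_sq_row: "finite K \<Longrightarrow> (\<Sum>k\<in>K. (coeff j k)\<^sup>2) \<le> hs_term j"
  using L.bessel_inequality[OF orthonormal, of K "J (A (e j))"]
  unfolding coeff_def ip_J_A_self by (simp add: L.ip_cnj[where y = "e _"])

lemma sum_coeff_sq_col: "finite K \<Longrightarrow> (\<Sum>j\<in>K. (coeff j k)\<^sup>2) \<le> hs_term k"
  using L.bessel_inequality[OF orthonormal, of K "J (A (e k))"]
  unfolding coeff_def ip_J_A_self by (simp add: ip_J_A_sym[of _ "e k"] L.ip_cnj[where y = "e _"])

text \<open>The diagonal of the Gram matrix of the \<open>pair_vector k\<close> contributes \<open>\<Sum> c\<^sub>k\<^sup>2 hs_term k\<close>;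
  the rest is bounded by the same quantity via \<open>2 c\<^sub>j c\<^sub>k \<le> c\<^sub>j\<^sup>2 + c\<^sub>k\<^sup>2\<close> and Bessel's
  inequality along the rows and columns of the symmetric matrix \<open>coeff\<close>.\<close>

lemma cnorm_sq_sum_pair_vector_le:
  fixes c :: "nat \<Rightarrow> real"
  assumes "finite K"
  shows "(cnorm ipF (\<Sum>k\<in>K. scF (c k) (pair_vector k)))\<^sup>2 \<le> 2 * (\<Sum>k\<in>K. (c k)\<^sup>2 * hs_term k)"
proof -
  let ?X = "\<Sum>k\<in>K. scF (c k) (pair_vector k)"
  let ?S = "\<Sum>k\<in>K. (c k)\<^sup>2 * hs_term k"
  have gram: "ipF ?X ?X = (\<Sum>j\<in>K. \<Sum>k\<in>K.
      complex_of_real (c j * c k * (coeff j k)\<^sup>2 + c j * c k * (if j = k then hs_term k else 0)))"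
    unfolding F.ip_sum_scale_sum ip_pair_vector by (intro sum.cong refl) (simp add: distrib_left)
  have "(cnorm ipF ?X)\<^sup>2 = (\<Sum>j\<in>K. \<Sum>k\<in>K. c j * c k * (coeff j k)\<^sup>2)
      + (\<Sum>j\<in>K. \<Sum>k\<in>K. c j * c k * (if j = k then hs_term k else 0))"
    unfolding F.cnorm_sq gram Re_sum Re_complex_of_real sum.distrib ..
  moreover have "(\<Sum>j\<in>K. \<Sum>k\<in>K. c j * c k * (if j = k then hs_term k else 0)) = ?S"
  proof (rule sum.cong)
    fix j assume "j \<in> K"
    then show "(\<Sum>k\<in>K. c j * c k * (if j = k then hs_term k else 0)) = (c j)\<^sup>2 * hs_term j"
      using assms by (simp add: if_distrib[of "\<lambda>t. _ * t"] power2_eq_square cong: if_cong)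
  qed simp
  moreover have "(\<Sum>j\<in>K. \<Sum>k\<in>K. c j * c k * (coeff j k)\<^sup>2)
      \<le> (\<Sum>j\<in>K. \<Sum>k\<in>K. (c j)\<^sup>2 * (coeff j k)\<^sup>2) / 2 + (\<Sum>j\<in>K. \<Sum>k\<in>K. (c k)\<^sup>2 * (coeff j k)\<^sup>2) / 2"
  proof -
    have "c j * c k * (coeff j k)\<^sup>2 \<le> ((c j)\<^sup>2 + (c k)\<^sup>2) / 2 * (coeff j k)\<^sup>2" for j k
      using sum_squares_bound[of "c j" "c k"] by (intro mult_right_mono) simp_all
    then have "(\<Sum>j\<in>K. \<Sum>k\<in>K. c j * c k * (coeff j k)\<^sup>2)
        \<le> (\<Sum>j\<in>K. \<Sum>k\<in>K. (c j)\<^sup>2 * (coeff j k)\<^sup>2 / 2 + (c k)\<^sup>2 * (coeff j k)\<^sup>2 / 2)"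
      by (intro sum_mono) (simp add: field_simps)
    then show ?thesis
      by (simp only: sum.distrib sum_divide_distrib)
  qed
  moreover have "(\<Sum>j\<in>K. \<Sum>k\<in>K. (c j)\<^sup>2 * (coeff j k)\<^sup>2) \<le> ?S"
  proof -
    have "(\<Sum>j\<in>K. \<Sum>k\<in>K. (c j)\<^sup>2 * (coeff j k)\<^sup>2) = (\<Sum>j\<in>K. (c j)\<^sup>2 * (\<Sum>k\<in>K. (coeff j k)\<^sup>2))"
      by (simp only: sum_distrib_left)
    also have "\<dots> \<le> ?S"
      using sum_coeff_sq_row[OF assms] by (intro sum_mono mult_left_mono) simp_all
    finally show ?thesis .
  qed
  moreover have "(\<Sum>j\<in>K. \<Sum>k\<in>K. (c k)\<^sup>2 * (coeff j k)\<^sup>2) \<le> ?S"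
  proof -
    have "(\<Sum>j\<in>K. \<Sum>k\<in>K. (c k)\<^sup>2 * (coeff j k)\<^sup>2) = (\<Sum>k\<in>K. \<Sum>j\<in>K. (c k)\<^sup>2 * (coeff j k)\<^sup>2)"
      by (rule sum.swap)
    also have "\<dots> = (\<Sum>k\<in>K. (c k)\<^sup>2 * (\<Sum>j\<in>K. (coeff j k)\<^sup>2))"
      by (simp only: sum_distrib_left)
    also have "\<dots> \<le> ?S"
      using sum_coeff_sq_col[OF assms] by (intro sum_mono mult_left_mono) simp_all
    finally show ?thesis .
  qed
  ultimately show ?thesis
    by linarith
qed

lemma sum_le_Re_ip_Omega_Delta:
  fixes c :: "nat \<Rightarrow> real"
  assumes c_nonneg: "\<And>k. c k \<ge> 0" and "M \<le> N"
  shows "(\<Sum>k<M. c k * hs_term k)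
    \<le> Re (ipF \<Omega> (Delta a J A e M (\<Sum>k<N. scF (c k) (pair_vector k))))"
proof -
  let ?\<Psi> = "\<Sum>k<N. scF (c k) (pair_vector k)"
  have "?\<Psi> \<in> D"
    unfolding pair_vector_def by (intro D_sum D_scale ad_in_D Omega_in_D)
  then have "ipF \<Omega> (Delta a J A e M ?\<Psi>) = (\<Sum>j<M. ipF (pair_vector j) ?\<Psi>)"
    by (simp add: Delta_def F.ip_sum_right ip_Omega_a_a pair_vector_def)
  also have "\<dots> = (\<Sum>j<M. \<Sum>k<N. complex_of_real (c k * ((coeff j k)\<^sup>2 + (if j = k then hs_term k else 0))))"
    by (simp add: F.ip_sum_right F.ip_scale_right ip_pair_vector)
  finally have "Re (ipF \<Omega> (Delta a J A e M ?\<Psi>))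
      = (\<Sum>j<M. \<Sum>k<N. c k * ((coeff j k)\<^sup>2 + (if j = k then hs_term k else 0)))"
    by (simp add: Re_sum)
  also have "\<dots> \<ge> (\<Sum>j<M. \<Sum>k<N. c k * (if j = k then hs_term k else 0))"
    using c_nonneg by (intro sum_mono mult_left_mono) auto
  also have "(\<Sum>j<M. \<Sum>k<N. c k * (if j = k then hs_term k else 0)) = (\<Sum>j<M. c j * hs_term j)"
    using \<open>M \<le> N\<close> by (intro sum.cong) (auto simp: if_distrib[of "\<lambda>t. c _ * t"] cong: if_cong)
  finally show ?thesis .
qed

lemma npart_2_lower_bound:
  fixes c :: "nat \<Rightarrow> real"
  assumes c_nonneg: "\<And>k. c k \<ge> 0" and summable: "summable (\<lambda>k. (c k)\<^sup>2 * hs_term k)"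
  obtains \<Psi> where "\<Psi> \<in> npart 2"
    and "\<And>M. (\<Sum>k<M. c k * hs_term k) \<le> Re (ipF \<Omega> (Delta a J A e M \<Psi>))"
proof -
  define P where "P N = (\<Sum>k<N. scF (c k) (pair_vector k))" for N
  have P_cspan: "P N \<in> cspan scF (creation_vectors ad \<Omega> 2)" for N
    unfolding P_def pair_vector_def by (intro F.cspan_sum F.cspan_scale F.cspan_base creation_vectors_2I)
  have "\<exists>\<Psi>. (\<lambda>N. cnorm ipF (P N - \<Psi>)) \<longlonglongrightarrow> 0"
    unfolding P_def
  proof (rule F.series_converges[OF F_complete summable_mult[OF summable, of 2]])
    fix m n :: nat
    show "(cnorm ipF (\<Sum>k\<in>{m..<n}. scF (c k) (pair_vector k)))\<^sup>2 \<le> (\<Sum>k\<in>{m..<n}. 2 * ((c k)\<^sup>2 * hs_term k))"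
      using cnorm_sq_sum_pair_vector_le[of "{m..<n}" c] by (simp add: sum_distrib_left)
  qed
  then obtain \<Psi> where lim: "(\<lambda>N. cnorm ipF (P N - \<Psi>)) \<longlonglongrightarrow> 0"
    by blast
  have \<Psi>: "\<Psi> \<in> npart 2"
    unfolding nparticle_def using P_cspan lim by (rule F.cclosure_limit)
  have "(\<Sum>k<M. c k * hs_term k) \<le> Re (ipF \<Omega> (Delta a J A e M \<Psi>))" for M
  proof (rule LIMSEQ_le_const)
    show "(\<lambda>N. Re (ipF \<Omega> (Delta a J A e M (P N)))) \<longlonglongrightarrow> Re (ipF \<Omega> (Delta a J A e M \<Psi>))"
      by (rule Re_ip_Omega_Delta_tendsto[OF cspan_in_npart[OF P_cspan] \<Psi> lim])
    show "\<exists>N. \<forall>n\<ge>N. (\<Sum>k<M. c k * hs_term k) \<le> Re (ipF \<Omega> (Delta a J A e M (P n)))"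
    proof (intro exI allI impI)
      fix n assume "M \<le> n"
      then show "(\<Sum>k<M. c k * hs_term k) \<le> Re (ipF \<Omega> (Delta a J A e M (P n)))"
        unfolding P_def by (rule sum_le_Re_ip_Omega_Delta[OF c_nonneg])
    qed
  qed
  with \<Psi> show thesis by (rule that)
qed

lemma summable_hs_term:
  assumes converges: "\<forall>\<Psi>\<in>npart 2. \<exists>\<Phi>. (\<lambda>M. cnorm ipF (Delta a J A e M \<Psi> - \<Phi>)) \<longlonglongrightarrow> 0"
  shows "summable hs_term"
proof (rule ccontr)
  assume diverges: "\<not> summable hs_term"
  define c where "c k = 1 / (1 + (\<Sum>i<Suc k. hs_term i))" for k
  have c_nonneg: "c k \<ge> 0" for k
    unfolding c_def using hs_term_nonneg by (simp add: sum_nonneg add_nonneg_nonneg)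
  have "summable (\<lambda>k. (c k)\<^sup>2 * hs_term k)"
    using summable_div_partial_sums_sq[of hs_term] hs_term_nonneg by (simp add: c_def power_divide)
  then obtain \<Psi> where "\<Psi> \<in> npart 2"
    and lower: "\<And>M. (\<Sum>k<M. c k * hs_term k) \<le> Re (ipF \<Omega> (Delta a J A e M \<Psi>))"
    using npart_2_lower_bound c_nonneg by blast
  then obtain \<Phi> where "(\<lambda>M. cnorm ipF (Delta a J A e M \<Psi> - \<Phi>)) \<longlonglongrightarrow> 0"
    using converges by blast
  from F.cnorm_eventually_le[OF this] obtain M0
    where upper: "\<forall>M\<ge>M0. cnorm ipF (Delta a J A e M \<Psi>) \<le> cnorm ipF \<Phi> + 1"
    by blast
  obtain M1 where "cnorm ipF \<Phi> + 1 < (\<Sum>k<M1. hs_term k / (1 + (\<Sum>i<Suc k. hs_term i)))"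
    using sum_div_partial_sums_unbounded[OF hs_term_nonneg diverges] by blast
  also have "\<dots> = (\<Sum>k<M1. c k * hs_term k)"
    by (simp add: c_def)
  also have "\<dots> \<le> (\<Sum>k<max M0 M1. c k * hs_term k)"
    using c_nonneg hs_term_nonneg by (intro sum_mono2) auto
  also have "\<dots> \<le> Re (ipF \<Omega> (Delta a J A e (max M0 M1) \<Psi>))"
    by (rule lower)
  also have "\<dots> \<le> cnorm ipF (Delta a J A e (max M0 M1) \<Psi>)"
    using abs_Re_ip_Omega_le_cnorm by (rule abs_le_D1)
  finally show False
    using upper[rule_format, of "max M0 M1"] by simp
qed

end

theorem proposition5p8:
  fixes scL :: "complex \<Rightarrow> 'l::ab_group_add \<Rightarrow> 'l" and ipL :: "'l \<Rightarrow> 'l \<Rightarrow> complex"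
    and J :: "'l \<Rightarrow> 'l" and A :: "'l \<Rightarrow> 'l" and e :: "nat \<Rightarrow> 'l"
    and scF :: "complex \<Rightarrow> 'f::ab_group_add \<Rightarrow> 'f" and ipF :: "'f \<Rightarrow> 'f \<Rightarrow> complex"
    and D :: "'f set" and a ad :: "'l \<Rightarrow> 'f \<Rightarrow> 'f" and \<Omega> :: 'f
  assumes "chilbert scL ipL"
    and "conjugation scL ipL J"
    and "fock_rep scL ipL J scF ipF D a ad \<Omega>"
    and "bounded_on scL ipL UNIV A"
    and "transpose_selfadj ipL J A"
    and "cons_system ipL e"
    and "\<forall>\<Psi>\<in>nparticle scF ipF ad \<Omega> 2.
           \<exists>\<Phi>. (\<lambda>M. cnorm ipF (Delta a J A e M \<Psi> - \<Phi>)) \<longlonglongrightarrow> 0"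
  shows "hilbert_schmidt scL ipL A"
proof -
  interpret fock_transpose_symmetric scL ipL J scF ipF D a ad \<Omega> A e
    using assms(1-3,5,6)
    by unfold_locales (simp_all add: chilbert_def pre_hilbert_def)
  have "summable hs_term"
    using assms(7) by (rule summable_hs_term)
  then show ?thesis
    using assms(4,6) unfolding hilbert_schmidt_def hs_term_def by blast
qed

end
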